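(* Let $v=(v^1,\dots,v^N)$ with $v^1=\cdots=v^N$, and suppose $S$ and $A$ are finite. Then for every state $s\in S$, a Nash equilibrium $(\lambda_*,\chi_* )$ in behavioral strategies of the extensive-form game based on $(v^1,\dots,v^N,-v^1,\dots,-v^N)$ under $s$ exists.
   Context: Setting: a Markov game with state perturbation adversaries with agents $1,\dots,N$, state space $S$, joint agent action set $A=A^1\times\cdots\times A^N$, adversary action sets $B^{\tilde i}$ (joint $B$), rewards $r^i:S\times A\times B\to\mathbb R$, transition kernel $p(s'\mid s,a,b)$, and perturbation function $f$; write $f_s(b)=(f(s,b^{\tilde 1}),\dots,f(s,b^{\tilde N}))$, assumed invertible so that $f_s^{-1}$ is defined. $\mathcal B(\epsilon,s)\subset S$ is the ball of radius $\epsilon$ about $s$. The extensive-form game (EFG) based on $(v^1,\dots,v^N,-v^1,\dots,-v^N)$ under $s\in S$ is the finite game tree in which player $P1$ moves first, choosing $\tilde s=(\tilde s^1,\dots,\tilde s^N)\in\tilde S=\mathcal B(\epsilon,s)^N$, and then player $P2$, who observes $\tilde s$, chooses $a\in A$; the payoff vector is $g_s(\tilde s,a)=(g^1_s,\dots,g^N_s)$ with $g^i_s(\tilde s,a)=r^i(s,a,f_s^{-1}(\tilde s))+\sum_{s'}p(s'\mid s,a,f_s^{-1}(\tilde s))v^i(s')$, which $P2$ receives while $P1$ receives $-g_s$. Behavioral strategies are $\lambda(\tilde s\mid s)=\prod_i\lambda^i(\tilde s^i\mid s)$ for $P1$ and $\chi(a\mid\tilde s)=\prod_i\chi^i(a^i\mid\tilde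 s^i)$ for $P2$. With $J^i(\lambda,\chi)=\mathbb E_{\lambda,\chi}[g^i_s]$, a pair $(\lambda_*,\chi_* )$ is a Nash equilibrium in behavioral strategies if for all $i$, all $\lambda,\chi$: $J^i(\lambda^i,\lambda_*^{-i},\chi_* )\ge J^i(\lambda_*,\chi_* )\ge J^i(\lambda_*,\chi^i,\chi_*^{-i})$. *)

theory Defs
  imports "HOL-Analysis.Analysis"
begin

text \<open>Agents are indexed by a finite type 'i (N = CARD('i)); joint objects are
functions on 'i. The state space is a finite set S in a metric space 'st.\<close>

definition pball :: "'st::metric_space set \<Rightarrow> 'st \<Rightarrow> real \<Rightarrow> 'st set" where
  "pball S s \<epsilon> = S \<inter> ball s \<epsilon>"

definition fjoint :: "('st \<Rightarrow> 'b \<Rightarrow> 'st) \<Rightarrow> 'st \<Rightarrow> ('i \<Rightarrow> 'b) \<Rightarrow> ('i \<Rightarrow> 'st)" where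
  "fjoint f s b = (\<lambda>j. f s (b j))"

definition is_dist :: "'x set \<Rightarrow> ('x \<Rightarrow> real) \<Rightarrow> bool" where
  "is_dist X d \<longleftrightarrow> (\<forall>x\<in>X. 0 \<le> d x) \<and> sum d X = 1"

definition adv_strat :: "'st set \<Rightarrow> ('i \<Rightarrow> 'st \<Rightarrow> real) \<Rightarrow> bool" where
  "adv_strat Bl lam \<longleftrightarrow> (\<forall>i. is_dist Bl (lam i))"

text \<open>P2 behavioral strategy: chi i st is, for each observed perturbed state st of agent i,
a distribution over A^i.\<close>
definition agent_strat :: "'st set \<Rightarrow> ('i \<Rightarrow> 'a set) \<Rightarrow> ('i \<Rightarrow> 'st \<Rightarrow> 'a \<Rightarrow> real) \<Rightarrow> bool" where
  "agent_strat Bl As chi \<longleftrightarrow> (\<forall>i. \<forall>st\<in>Bl. is_dist (As i) (chi i st))"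

definition efg_payoff ::
  "'st set \<Rightarrow> ('i \<Rightarrow> 'st \<Rightarrow> ('i \<Rightarrow> 'a) \<Rightarrow> ('i \<Rightarrow> 'b) \<Rightarrow> real)
   \<Rightarrow> ('st \<Rightarrow> ('i \<Rightarrow> 'a) \<Rightarrow> ('i \<Rightarrow> 'b) \<Rightarrow> 'st \<Rightarrow> real)
   \<Rightarrow> ('i \<Rightarrow> 'st \<Rightarrow> real) \<Rightarrow> ('i \<Rightarrow> 'b set) \<Rightarrow> ('st \<Rightarrow> 'b \<Rightarrow> 'st)
   \<Rightarrow> 'st \<Rightarrow> 'i \<Rightarrow> ('i \<Rightarrow> 'st) \<Rightarrow> ('i \<Rightarrow> 'a) \<Rightarrow> real" where
  "efg_payoff S r p v Bs f s i st a =
     (let b = inv_into (Pi\<^sub>E UNIV Bs) (fjoint f s) st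
      in r i s a b + (\<Sum>s'\<in>S. p s a b s' * v i s'))"

definition efg_J ::
  "'st::metric_space set \<Rightarrow> ('i::finite \<Rightarrow> 'a set)
   \<Rightarrow> ('i \<Rightarrow> 'st \<Rightarrow> ('i \<Rightarrow> 'a) \<Rightarrow> ('i \<Rightarrow> 'b) \<Rightarrow> real)
   \<Rightarrow> ('st \<Rightarrow> ('i \<Rightarrow> 'a) \<Rightarrow> ('i \<Rightarrow> 'b) \<Rightarrow> 'st \<Rightarrow> real)
   \<Rightarrow> ('i \<Rightarrow> 'st \<Rightarrow> real) \<Rightarrow> ('i \<Rightarrow> 'b set) \<Rightarrow> ('st \<Rightarrow> 'b \<Rightarrow> 'st) \<Rightarrow> real
   \<Rightarrow> 'st \<Rightarrow> 'i \<Rightarrow> ('i \<Rightarrow> 'st \<Rightarrow> real) \<Rightarrow> ('i \<Rightarrow> 'st \<Rightarrow> 'a \<Rightarrow> real) \<Rightarrow> real" where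
  "efg_J S As r p v Bs f \<epsilon> s i lam chi =
     (\<Sum>st\<in>Pi\<^sub>E UNIV (\<lambda>_. pball S s \<epsilon>). \<Sum>a\<in>Pi\<^sub>E UNIV As.
        (\<Prod>j\<in>UNIV. lam j (st j)) * (\<Prod>j\<in>UNIV. chi j (st j) (a j))
        * efg_payoff S r p v Bs f s i st a)"

definition efg_nash where
  "efg_nash S As r p v Bs f \<epsilon> s lam chi \<longleftrightarrow>
     adv_strat (pball S s \<epsilon>) lam \<and> agent_strat (pball S s \<epsilon>) As chi \<and>
     (\<forall>i. (\<forall>l. is_dist (pball S s \<epsilon>) l \<longrightarrow>
             efg_J S As r p v Bs f \<epsilon> s i (lam(i := l)) chi \<ge> efg_J S As r p v Bs f \<epsilon> s i lam chi) \<and>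
          (\<forall>c. (\<forall>st\<in>pball S s \<epsilon>. is_dist (As i) (c st)) \<longrightarrow>
             efg_J S As r p v Bs f \<epsilon> s i lam chi \<ge> efg_J S As r p v Bs f \<epsilon> s i lam (chi(i := c))))"

end

(*
  The equilibrium is obtained from Nash's theorem for an auxiliary finite game whose players are
  adversary i (choosing the perturbed state shown to agent i, payoff -J^i) and agent i at each
  information set t (choosing an action, payoff J^i).  Every payoff is affine in the player's own
  mixed move, so at a fixed point of Nash's map sigma |-> (sigma + gain) / (1 + sum of gains) no
  pure, hence no mixed, deviation pays off.  Since J^i is linear in chi^i, a deviation of agent i
  at all information sets at once splits into deviations at single information sets.  The fixed
  point comes from Brouwer's theorem, proved for the disc in the coordinate space nat => real from
  the non-contractibility of the sphere and carried over to products of simplices by a coordinate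
  embedding followed by a retraction.
*)
theory Submission
  imports Defs "HOL-Homology.Homology"
begin

definition ndisc :: "nat \<Rightarrow> (nat \<Rightarrow> real) set" where
  "ndisc n = {x. (\<Sum>i\<le>n. (x i)\<^sup>2) \<le> 1 \<and> (\<forall>i>n. x i = 0)}"

definition nnormalize :: "nat \<Rightarrow> (nat \<Rightarrow> real) \<Rightarrow> nat \<Rightarrow> real" where
  "nnormalize n y = (\<lambda>i. y i / sqrt (\<Sum>j\<le>n. (y j)\<^sup>2))"

lemma topspace_nsphere_eq:
  "topspace (nsphere n) = {x. (\<Sum>i\<le>n. (x i)\<^sup>2) = 1 \<and> (\<forall>i>n. x i = 0)}"
  by (simp add: nsphere)

lemma nsphere_eq_top_of_set: "nsphere n = top_of_set (topspace (nsphere n))"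
  by (simp add: nsphere euclidean_product_topology)

lemma sum_squares_eq_0_imp_zero:
  fixes y :: "nat \<Rightarrow> real"
  assumes "(\<Sum>i\<le>n. (y i)\<^sup>2) = 0" and "\<forall>i>n. y i = 0"
  shows "y = (\<lambda>_. 0)"
proof (rule ext)
  fix i
  show "y i = 0"
  proof (cases "i \<le> n")
    case True
    then show ?thesis
      using assms(1) sum_nonneg_eq_0_iff[of "{..n}" "\<lambda>i. (y i)\<^sup>2"] by simp
  qed (use assms(2) in simp)
qed

lemma nnormalize_in_nsphere:
  assumes "\<forall>i>n. y i = 0" and "y \<noteq> (\<lambda>_. 0)"
  shows "nnormalize n y \<in> topspace (nsphere n)"
proof -
  define q where "q = (\<Sum>j\<le>n. (y j)\<^sup>2)"
  have "q \<noteq> 0"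
    using assms sum_squares_eq_0_imp_zero unfolding q_def by blast
  then have "q > 0"
    unfolding q_def by (simp add: sum_nonneg order_le_neq_trans)
  then have "(\<Sum>i\<le>n. (nnormalize n y i)\<^sup>2) = 1"
    by (simp add: nnormalize_def power_divide q_def[symmetric] sum_divide_distrib[symmetric])
  then show ?thesis
    using assms(1) by (simp add: topspace_nsphere_eq nnormalize_def)
qed

lemma nnormalize_nsphere: "x \<in> topspace (nsphere n) \<Longrightarrow> nnormalize n x = x"
  by (simp add: topspace_nsphere_eq nnormalize_def)

lemma continuous_on_nnormalize:
  assumes "continuous_on T h"
    and "\<And>z. z \<in> T \<Longrightarrow> \<forall>i>n. h z i = 0" and "\<And>z. z \<in> T \<Longrightarrow> h z \<noteq> (\<lambda>_. 0)"
  shows "continuous_on T (\<lambda>z. nnormalize n (h z))"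
proof -
  have "(\<Sum>j\<le>n. (h z j)\<^sup>2) \<noteq> 0" if "z \<in> T" for z
    using assms(2,3)[OF that] sum_squares_eq_0_imp_zero by blast
  then show ?thesis
    unfolding nnormalize_def
    by (intro continuous_intros continuous_on_product_then_coordinatewise[OF assms(1)]) auto
qed

lemma homotopic_with_nnormalize:
  fixes H :: "real \<Rightarrow> (nat \<Rightarrow> real) \<Rightarrow> nat \<Rightarrow> real"
  assumes cont: "continuous_on ({0..1} \<times> topspace (nsphere n)) (\<lambda>(t, x). H t x)"
    and support: "\<And>t x. t \<in> {0..1} \<Longrightarrow> x \<in> topspace (nsphere n) \<Longrightarrow> \<forall>i>n. H t x i = 0"
    and nonzero: "\<And>t x. t \<in> {0..1} \<Longrightarrow> x \<in> topspace (nsphere n) \<Longrightarrow> H t x \<noteq> (\<lambda>_. 0)"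
  shows "homotopic_with (\<lambda>_. True) (nsphere n) (nsphere n)
           (\<lambda>x. nnormalize n (H 0 x)) (\<lambda>x. nnormalize n (H 1 x))"
  unfolding homotopic_with_def
proof (intro exI conjI allI)
  have "continuous_on ({0..1} \<times> topspace (nsphere n)) (\<lambda>z. nnormalize n ((\<lambda>(t, x). H t x) z))"
    by (rule continuous_on_nnormalize[OF cont]) (use support nonzero in auto)
  then show "continuous_map (prod_topology (top_of_set {0..1}) (nsphere n)) (nsphere n)
      (\<lambda>(t, x). nnormalize n (H t x))"
    using support nonzero unfolding split_def
    by (subst (1 2) nsphere_eq_top_of_set)
      (auto simp: prod_topology_subtopology_eu continuous_map_subtopology_eu
            intro!: nnormalize_in_nsphere)
qed auto

lemma ndisc_scale:
  assumes "x \<in> ndisc n" and "t \<in> {0..1}"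
  shows "(\<lambda>i. t * x i) \<in> ndisc n"
proof -
  have "(\<Sum>i\<le>n. (t * x i)\<^sup>2) = t\<^sup>2 * (\<Sum>i\<le>n. (x i)\<^sup>2)"
    by (simp add: power_mult_distrib sum_distrib_left)
  also have "\<dots> \<le> 1"
    using assms by (intro mult_le_one) (auto simp: ndisc_def power_le_one sum_nonneg)
  finally show ?thesis
    using assms(1) by (simp add: ndisc_def)
qed

lemma topspace_nsphere_subset_ndisc: "topspace (nsphere n) \<subseteq> ndisc n"
  by (auto simp: topspace_nsphere_eq ndisc_def)

lemma continuous_on_snd_coordinate: "continuous_on (A \<times> B) (\<lambda>z. snd z i :: real)"
  by (rule continuous_on_product_then_coordinatewise[OF continuous_on_snd[OF continuous_on_id]])

lemma homotopic_id_nnormalize_displacement: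
  assumes cont: "continuous_on (ndisc n) f" and maps: "f \<in> ndisc n \<rightarrow> ndisc n"
    and nofix: "\<And>x. x \<in> ndisc n \<Longrightarrow> f x \<noteq> x"
  shows "homotopic_with (\<lambda>_. True) (nsphere n) (nsphere n) id (\<lambda>x. nnormalize n (\<lambda>i. x i - f x i))"
proof -
  have "homotopic_with (\<lambda>_. True) (nsphere n) (nsphere n)
      (\<lambda>x. nnormalize n (\<lambda>i. x i - 0 * f x i)) (\<lambda>x. nnormalize n (\<lambda>i. x i - 1 * f x i))"
  proof (rule homotopic_with_nnormalize[where H = "\<lambda>t x i. x i - t * f x i"])
    have "continuous_on ({0..1::real} \<times> topspace (nsphere n)) (\<lambda>z. f (snd z) i)" for i
      using topspace_nsphere_subset_ndisc
      by (intro continuous_on_compose2[OF continuous_on_product_then_coordinatewise[OF cont]]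
          continuous_intros) auto
    then show "continuous_on ({0..1} \<times> topspace (nsphere n)) (\<lambda>(t, x) i. x i - t * f x i)"
      unfolding split_def by (intro continuous_intros continuous_on_snd_coordinate)
    fix t :: real and x assume t: "t \<in> {0..1}" and x: "x \<in> topspace (nsphere n)"
    then have x_ndisc: "x \<in> ndisc n"
      using topspace_nsphere_subset_ndisc by blast
    moreover have "f x \<in> ndisc n"
      using maps x_ndisc by blast
    ultimately show "\<forall>i>n. x i - t * f x i = 0"
      by (simp add: ndisc_def)
    show "(\<lambda>i. x i - t * f x i) \<noteq> (\<lambda>_. 0)"
    proof
      assume zero: "(\<lambda>i. x i - t * f x i) = (\<lambda>_. 0)"
      have x_eq: "x i = t * f x i" for i
        using fun_cong[OF zero, of i] by simp
      have "1 = (\<Sum>i\<le>n. (x i)\<^sup>2)"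
        using x by (simp add: topspace_nsphere_eq)
      also have "\<dots> = t\<^sup>2 * (\<Sum>i\<le>n. (f x i)\<^sup>2)"
        by (simp add: x_eq power_mult_distrib sum_distrib_left)
      also have "\<dots> \<le> t\<^sup>2"
        using maps x_ndisc by (auto simp: ndisc_def intro: mult_left_le)
      finally have "t = 1"
        using t power_less_one_iff[of t 2] by fastforce
      then have "f x = x"
        using x_eq by (simp add: fun_eq_iff)
      then show False
        using nofix[OF x_ndisc] by blast
    qed
  qed
  then show ?thesis
    by (rule homotopic_with_eq) (auto simp: nnormalize_nsphere)
qed

lemma homotopic_const_nnormalize_displacement:
  assumes cont: "continuous_on (ndisc n) f" and maps: "f \<in> ndisc n \<rightarrow> ndisc n"
    and nofix: "\<And>x. x \<in> ndisc n \<Longrightarrow> f x \<noteq> x"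
  shows "homotopic_with (\<lambda>_. True) (nsphere n) (nsphere n)
           (\<lambda>_. nnormalize n (\<lambda>i. - f (\<lambda>_. 0) i)) (\<lambda>x. nnormalize n (\<lambda>i. x i - f x i))"
proof -
  have "homotopic_with (\<lambda>_. True) (nsphere n) (nsphere n)
      (\<lambda>x. nnormalize n (\<lambda>i. 0 * x i - f (\<lambda>j. 0 * x j) i))
      (\<lambda>x. nnormalize n (\<lambda>i. 1 * x i - f (\<lambda>j. 1 * x j) i))"
  proof (rule homotopic_with_nnormalize[where H = "\<lambda>t x i. t * x i - f (\<lambda>j. t * x j) i"])
    have "continuous_on ({0..1} \<times> topspace (nsphere n)) (\<lambda>z. f (\<lambda>j. fst z * snd z j) i)" for i
      by (intro continuous_on_compose2[OF continuous_on_product_then_coordinatewise[OF cont]]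
          continuous_intros continuous_on_snd_coordinate)
        (auto intro!: ndisc_scale intro: subsetD[OF topspace_nsphere_subset_ndisc])
    then show "continuous_on ({0..1} \<times> topspace (nsphere n)) (\<lambda>(t, x) i. t * x i - f (\<lambda>j. t * x j) i)"
      unfolding split_def by (intro continuous_intros continuous_on_snd_coordinate)
    fix t :: real and x assume "t \<in> {0..1}" "x \<in> topspace (nsphere n)"
    then have tx: "(\<lambda>i. t * x i) \<in> ndisc n"
      using topspace_nsphere_subset_ndisc ndisc_scale by blast
    moreover have "f (\<lambda>j. t * x j) \<in> ndisc n"
      using maps tx by blast
    ultimately show "\<forall>i>n. t * x i - f (\<lambda>j. t * x j) i = 0"
      by (simp add: ndisc_def)
    show "(\<lambda>i. t * x i - f (\<lambda>j. t * x j) i) \<noteq> (\<lambda>_. 0)"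
    proof
      assume zero: "(\<lambda>i. t * x i - f (\<lambda>j. t * x j) i) = (\<lambda>_. 0)"
      have "f (\<lambda>j. t * x j) i = t * x i" for i
        using fun_cong[OF zero, of i] by simp
      then have "f (\<lambda>j. t * x j) = (\<lambda>i. t * x i)" ..
      then show False
        using nofix[OF tx] by blast
    qed
  qed
  then show ?thesis
    by (rule homotopic_with_eq) auto
qed

theorem brouwer_ndisc:
  assumes cont: "continuous_on (ndisc n) f" and maps: "f \<in> ndisc n \<rightarrow> ndisc n"
  obtains x where "x \<in> ndisc n" and "f x = x"
proof (rule ccontr)
  assume "\<not> thesis"
  with that have nofix: "f x \<noteq> x" if "x \<in> ndisc n" for x
    using that by blast
  have "contractible_space (nsphere n)"
    unfolding contractible_space_def
    using homotopic_with_trans[OF homotopic_id_nnormalize_displacement[OF cont maps nofix]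
        homotopic_with_symD[OF homotopic_const_nnormalize_displacement[OF cont maps nofix]]]
    by blast
  then show False
    using non_contractible_space_nsphere by blast
qed

text \<open>Profiles vanish outside the decision points and their moves, so each is determined by
  finitely many coordinates.\<close>

definition strategy_profiles :: "'k set \<Rightarrow> ('k \<Rightarrow> 'e set) \<Rightarrow> ('k \<Rightarrow> 'e \<Rightarrow> real) set" where
  "strategy_profiles K E =
     {\<sigma>. (\<forall>k\<in>K. is_dist (E k) (\<sigma> k)) \<and> (\<forall>k e. k \<notin> K \<or> e \<notin> E k \<longrightarrow> \<sigma> k e = 0)}"

lemma is_dist_le_1:
  assumes "is_dist X d" "finite X" "x \<in> X"
  shows "d x \<le> 1"
  using assms member_le_sum[of x X d] by (auto simp: is_dist_def)

text \<open>The positive part is topped up uniformly to total mass at least 1 and then rescaled; on the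
  simplex nothing changes.\<close>

definition simplex_retraction :: "'e set \<Rightarrow> ('e \<Rightarrow> real) \<Rightarrow> 'e \<Rightarrow> real" where
  "simplex_retraction X y =
     (let s = (\<Sum>x\<in>X. max 0 (y x)) in (\<lambda>x. (max 0 (y x) + max 0 (1 - s) / card X) / max 1 s))"

lemma is_dist_simplex_retraction:
  assumes "finite X" "X \<noteq> {}"
  shows "is_dist X (simplex_retraction X y)"
proof -
  define s where "s = (\<Sum>x\<in>X. max 0 (y x))"
  have "(\<Sum>x\<in>X. max 0 (y x) + max 0 (1 - s) / card X) = max 1 s"
    using assms by (simp add: sum.distrib s_def[symmetric])
  then have "(\<Sum>x\<in>X. (max 0 (y x) + max 0 (1 - s) / card X) / max 1 s) = 1"
    by (simp add: sum_divide_distrib[symmetric])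
  then show ?thesis
    unfolding is_dist_def simplex_retraction_def Let_def s_def[symmetric] by simp
qed

lemma simplex_retraction_id:
  assumes "is_dist X d" "x \<in> X"
  shows "simplex_retraction X d x = d x"
  using assms by (simp add: is_dist_def simplex_retraction_def)

lemma continuous_on_simplex_retraction:
  assumes "finite X" "X \<noteq> {}"
  shows "continuous_on UNIV (\<lambda>y. simplex_retraction X y x)"
  using assms unfolding simplex_retraction_def Let_def
  by (intro continuous_intros) (auto simp: max_def)

lemma strategy_profiles_retract_of_UNIV:
  assumes "\<And>k. k \<in> K \<Longrightarrow> finite (E k)" and "\<And>k. k \<in> K \<Longrightarrow> E k \<noteq> {}"
  shows "strategy_profiles K E retract_of UNIV"
proof -
  define r where "r \<sigma> k e = (if k \<in> K \<and> e \<in> E k then simplex_retraction (E k) (\<sigma> k) e else 0)" for \<sigma> k e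
  have "continuous_on UNIV (\<lambda>\<sigma>. r \<sigma> k e)" for k e
  proof (cases "k \<in> K \<and> e \<in> E k")
    case True
    then show ?thesis
      unfolding r_def
      by (auto intro: continuous_on_compose2[OF continuous_on_simplex_retraction] simp: assms)
  next
    case False
    then show ?thesis
      unfolding r_def if_not_P[OF False] by simp
  qed
  then have "continuous_on UNIV r"
    by (intro continuous_on_coordinatewise_then_product)
  moreover have "r \<sigma> \<in> strategy_profiles K E" for \<sigma>
    using is_dist_simplex_retraction[OF assms]
    by (simp add: r_def strategy_profiles_def is_dist_def)
  moreover have "r \<sigma> = \<sigma>" if "\<sigma> \<in> strategy_profiles K E" for \<sigma>
    using that by (auto simp: r_def strategy_profiles_def simplex_retraction_id fun_eq_iff)
  ultimately show ?thesis
    unfolding retract_of_def retraction_def by blast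
qed

lemma strategy_profile_abs_le_1:
  assumes "\<sigma> \<in> strategy_profiles K E" "\<And>k. k \<in> K \<Longrightarrow> finite (E k)"
  shows "\<bar>\<sigma> k e\<bar> \<le> 1"
  using assms is_dist_le_1[of "E k" "\<sigma> k" e]
  by (cases "k \<in> K \<and> e \<in> E k") (auto simp: strategy_profiles_def is_dist_def)

lemma continuous_on_profile_entry: "continuous_on S (\<lambda>\<sigma>::'k \<Rightarrow> 'e \<Rightarrow> real. \<sigma> k e)"
  by (rule continuous_on_subset[OF continuous_on_product_then_coordinatewise[OF
        continuous_on_product_coordinates] subset_UNIV])

lemma finite_support_embedding_ndisc:
  fixes C :: "('k \<times> 'e) set"
  assumes "finite C"
  obtains enc :: "('k \<Rightarrow> 'e \<Rightarrow> real) \<Rightarrow> nat \<Rightarrow> real" and dec :: "(nat \<Rightarrow> real) \<Rightarrow> 'k \<Rightarrow> 'e \<Rightarrow> real"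
    and m where "continuous_on UNIV enc" and "continuous_on UNIV dec"
    and "\<And>\<sigma>. (\<And>k e. \<bar>\<sigma> k e\<bar> \<le> 1) \<Longrightarrow> enc \<sigma> \<in> ndisc m"
    and "\<And>\<sigma>. (\<And>k e. (k, e) \<notin> C \<Longrightarrow> \<sigma> k e = 0) \<Longrightarrow> dec (enc \<sigma>) = \<sigma>"
proof -
  define m where "m = card C"
  define c :: real where "c = 1 / (m + 1)"
  have c_pos: "c > 0"
    by (simp add: c_def)
  obtain idx where idx: "bij_betw idx C {0..<m}"
    unfolding m_def using ex_bij_betw_finite_nat[OF assms] by blast
  define h where "h = inv_into C idx"
  have h: "h j \<in> C \<and> idx (h j) = j" if "j < m" for j
    using that idx by (auto simp: h_def bij_betw_def inv_into_into f_inv_into_f)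
  have idx_h: "h (idx q) = q" if "q \<in> C" for q
    using that idx by (simp add: h_def bij_betw_def)
  define enc where "enc \<sigma> j = (if j < m then c * \<sigma> (fst (h j)) (snd (h j)) else 0)" for \<sigma> j
  define dec where "dec x k e = (if (k, e) \<in> C then x (idx (k, e)) / c else 0)" for x k e
  have "continuous_on UNIV (\<lambda>\<sigma>. enc \<sigma> j)" for j
    by (cases "j < m") (simp_all add: enc_def continuous_on_profile_entry continuous_on_mult_left)
  then have "continuous_on UNIV enc"
    by (intro continuous_on_coordinatewise_then_product)
  moreover have "continuous_on UNIV (\<lambda>x::nat \<Rightarrow> real. x j / c)" for j
    using c_pos by (intro continuous_on_divide continuous_on_product_coordinates continuous_on_const) auto
  then have "continuous_on UNIV (\<lambda>x. dec x k e)" for k e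
    by (cases "(k, e) \<in> C") (simp_all add: dec_def)
  then have "continuous_on UNIV dec"
    by (intro continuous_on_coordinatewise_then_product)
  moreover have "enc \<sigma> \<in> ndisc m" if bounded: "\<And>k e. \<bar>\<sigma> k e\<bar> \<le> 1" for \<sigma>
  proof -
    have "(enc \<sigma> j)\<^sup>2 \<le> c\<^sup>2" for j
      using bounded c_pos by (auto simp: enc_def abs_mult intro!: power2_le_iff_abs_le[THEN iffD2])
    then have "(\<Sum>j\<le>m. (enc \<sigma> j)\<^sup>2) \<le> (m + 1) * c\<^sup>2"
      using sum_mono[of "{..m}" "\<lambda>j. (enc \<sigma> j)\<^sup>2" "\<lambda>_. c\<^sup>2"] by simp
    also have "\<dots> \<le> 1"
      by (simp add: c_def power2_eq_square)
    finally show ?thesis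
      by (simp add: ndisc_def enc_def)
  qed
  moreover have "dec (enc \<sigma>) = \<sigma>" if "\<And>k e. (k, e) \<notin> C \<Longrightarrow> \<sigma> k e = 0" for \<sigma>
    using that h idx_h idx c_pos by (auto simp: dec_def enc_def bij_betw_def fun_eq_iff)
  ultimately show ?thesis
    using that by blast
qed

theorem fixpoint_strategy_profiles:
  fixes K :: "'k set" and E :: "'k \<Rightarrow> 'e set"
  assumes finK: "finite K" and finE: "\<And>k. k \<in> K \<Longrightarrow> finite (E k)"
    and neE: "\<And>k. k \<in> K \<Longrightarrow> E k \<noteq> {}"
    and cont: "continuous_on (strategy_profiles K E) \<Phi>"
    and maps: "\<Phi> \<in> strategy_profiles K E \<rightarrow> strategy_profiles K E"
  obtains \<sigma> where "\<sigma> \<in> strategy_profiles K E" and "\<Phi> \<sigma> = \<sigma>"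
proof -
  define P where "P = strategy_profiles K E"
  have "finite (Sigma K E)"
    using finK finE by simp
  then obtain enc :: "('k \<Rightarrow> 'e \<Rightarrow> real) \<Rightarrow> nat \<Rightarrow> real" and dec and m
    where cont_enc: "continuous_on UNIV enc" and cont_dec: "continuous_on UNIV dec"
    and enc_ndisc: "\<And>\<sigma>. (\<And>k e. \<bar>\<sigma> k e\<bar> \<le> 1) \<Longrightarrow> enc \<sigma> \<in> ndisc m"
    and dec_enc: "\<And>\<sigma>. (\<And>k e. (k, e) \<notin> Sigma K E \<Longrightarrow> \<sigma> k e = 0) \<Longrightarrow> dec (enc \<sigma>) = \<sigma>"
    by (rule finite_support_embedding_ndisc) blast
  obtain ret where ret: "retraction UNIV P ret"
    using strategy_profiles_retract_of_UNIV[of K E, folded P_def] finE neE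
    unfolding retract_of_def by blast
  have "continuous_on UNIV ret"
    using ret by (simp add: retraction_def)
  then have "continuous_on (ndisc m) (ret \<circ> dec)"
    using cont_dec by (metis continuous_on_compose continuous_on_subset subset_UNIV)
  moreover have "enc \<in> P \<rightarrow> ndisc m"
  proof
    fix \<sigma> assume "\<sigma> \<in> P"
    then show "enc \<sigma> \<in> ndisc m"
      using strategy_profile_abs_le_1[of \<sigma> K E] finE unfolding P_def by (intro enc_ndisc) blast
  qed
  moreover have "(ret \<circ> dec) (enc \<sigma>) = \<sigma>" if "\<sigma> \<in> P" for \<sigma>
  proof -
    have "dec (enc \<sigma>) = \<sigma>"
      by (rule dec_enc) (use that in \<open>auto simp: P_def strategy_profiles_def\<close>)
    then show ?thesis
      using ret that by (simp add: retraction_def)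
  qed
  moreover have "ret \<circ> dec \<in> ndisc m \<rightarrow> P"
    using ret by (auto simp: retraction_def)
  ultimately obtain \<sigma> where "\<sigma> \<in> P" "\<Phi> \<sigma> = \<sigma>"
    using invertible_fixpoint_property[where S = "ndisc m" and T = P and i = enc and r = "ret \<circ> dec",
        OF continuous_on_subset[OF cont_enc subset_UNIV] _ _ _ _ _
          cont[folded P_def] maps[folded P_def]]
      brouwer_ndisc by metis
  then show ?thesis
    using that unfolding P_def by blast
qed

lemma is_dist_ex_weighted_le_mean:
  assumes "finite X" "is_dist X p"
  obtains x where "x \<in> X" "p x > 0" "u x \<le> (\<Sum>y\<in>X. p y * u y)"
proof (rule ccontr)
  define V where "V = (\<Sum>y\<in>X. p y * u y)"
  assume "\<not> thesis"
  with that have above: "u x > V" if "x \<in> X" "p x > 0" for x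
    using that unfolding V_def by force
  have p_nonneg: "p x \<ge> 0" if "x \<in> X" for x
    using assms(2) that by (simp add: is_dist_def)
  have term_nonneg: "p x * (u x - V) \<ge> 0" if "x \<in> X" for x
    using above[OF that] p_nonneg[OF that] by (cases "p x > 0") auto
  have "(\<Sum>x\<in>X. p x * (u x - V)) = V - (\<Sum>x\<in>X. p x) * V"
    by (simp add: V_def algebra_simps sum_subtractf sum_distrib_right)
  also have "\<dots> = 0"
    using assms(2) by (simp add: is_dist_def)
  finally have zero_terms: "\<forall>x\<in>X. p x * (u x - V) = 0"
    using sum_nonneg_eq_0_iff[OF assms(1) term_nonneg] by simp
  have "p x = 0" if "x \<in> X" for x
  proof (rule ccontr)
    assume "p x \<noteq> 0"
    then have "p x * (u x - V) > 0"
      using p_nonneg[OF that] above[OF that] by simp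
    then show False
      using zero_terms that by simp
  qed
  then show False
    using assms(2) by (simp add: is_dist_def)
qed

lemma nash_fixpoint_no_gain:
  fixes X :: "'x set" and p u :: "'x \<Rightarrow> real"
  defines "V \<equiv> (\<Sum>y\<in>X. p y * u y)"
  defines "gain \<equiv> \<lambda>x. max 0 (u x - V)"
  assumes "finite X" and "is_dist X p"
    and fixed: "\<And>x. x \<in> X \<Longrightarrow> p x = (p x + gain x) / (1 + (\<Sum>y\<in>X. gain y))"
    and "x \<in> X"
  shows "u x \<le> V"
proof -
  define G where "G = (\<Sum>y\<in>X. gain y)"
  have G_nonneg: "G \<ge> 0"
    by (simp add: G_def gain_def sum_nonneg)
  have gain_eq: "gain y = p y * G" if "y \<in> X" for y
  proof -
    have "p y * (1 + G) = p y + gain y"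
      using fixed[OF that] G_nonneg unfolding G_def[symmetric] by (simp add: eq_divide_eq)
    then show ?thesis
      by (simp add: algebra_simps)
  qed
  \<comment> \<open>A move in the support doing no better than the mean has gain 0 = p y * G.\<close>
  obtain y where "y \<in> X" "p y > 0" "u y \<le> V"
    using is_dist_ex_weighted_le_mean[OF assms(3,4)] unfolding V_def by blast
  then have "G = 0"
    using gain_eq[of y] by (simp add: gain_def)
  then have "gain x = 0"
    using gain_eq[OF assms(6)] by simp
  then show ?thesis
    by (simp add: gain_def)
qed

lemma is_dist_nash_update:
  assumes "finite X" "is_dist X p" "\<And>x. g x \<ge> 0"
  shows "is_dist X (\<lambda>x. (p x + g x) / (1 + sum g X))"
proof -
  have "sum g X \<ge> 0"
    using assms(3) by (simp add: sum_nonneg)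
  moreover have "(\<Sum>x\<in>X. p x + g x) = 1 + sum g X"
    using assms(2) by (simp add: sum.distrib is_dist_def)
  ultimately show ?thesis
    using assms(2,3) by (simp add: is_dist_def sum_divide_distrib[symmetric] add_nonneg_nonneg)
qed

lemma is_dist_indicator: "e \<in> X \<Longrightarrow> finite X \<Longrightarrow> is_dist X (indicator {e})"
  by (simp add: is_dist_def indicator_def)

lemma strategy_profiles_update:
  assumes "\<sigma> \<in> strategy_profiles K E" "k \<in> K" "is_dist (E k) \<tau>" "\<And>e. e \<notin> E k \<Longrightarrow> \<tau> e = 0"
  shows "\<sigma>(k := \<tau>) \<in> strategy_profiles K E"
  using assms by (auto simp: strategy_profiles_def)

lemma continuous_on_fun_upd: "continuous_on S (\<lambda>\<sigma>::'k \<Rightarrow> 'e \<Rightarrow> real. \<sigma>(k := \<tau>))"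
proof (intro continuous_on_coordinatewise_then_product)
  fix k' e
  show "continuous_on S (\<lambda>\<sigma>::'k \<Rightarrow> 'e \<Rightarrow> real. (\<sigma>(k := \<tau>)) k' e)"
    by (cases "k' = k") (simp_all add: continuous_on_profile_entry)
qed

definition nash_gain :: "('k \<Rightarrow> ('k \<Rightarrow> 'e \<Rightarrow> real) \<Rightarrow> real) \<Rightarrow> ('k \<Rightarrow> 'e \<Rightarrow> real) \<Rightarrow> 'k \<Rightarrow> 'e \<Rightarrow> real" where
  "nash_gain U \<sigma> k e = max 0 (U k (\<sigma>(k := indicator {e})) - U k \<sigma>)"

definition nash_map ::
  "'k set \<Rightarrow> ('k \<Rightarrow> 'e set) \<Rightarrow> ('k \<Rightarrow> ('k \<Rightarrow> 'e \<Rightarrow> real) \<Rightarrow> real) \<Rightarrow> ('k \<Rightarrow> 'e \<Rightarrow> real) \<Rightarrow> 'k \<Rightarrow> 'e \<Rightarrow> real"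
where
  "nash_map K E U \<sigma> k e =
     (if k \<in> K \<and> e \<in> E k
      then (\<sigma> k e + nash_gain U \<sigma> k e) / (1 + (\<Sum>e'\<in>E k. nash_gain U \<sigma> k e'))
      else 0)"

lemma nash_map_strategy_profiles:
  assumes "\<And>k. k \<in> K \<Longrightarrow> finite (E k)"
  shows "nash_map K E U \<in> strategy_profiles K E \<rightarrow> strategy_profiles K E"
proof
  fix \<sigma> assume \<sigma>: "\<sigma> \<in> strategy_profiles K E"
  have "is_dist (E k) (nash_map K E U \<sigma> k)" if "k \<in> K" for k
  proof -
    have "is_dist (E k) (\<lambda>e. (\<sigma> k e + nash_gain U \<sigma> k e) / (1 + sum (nash_gain U \<sigma> k) (E k)))"
      using \<sigma> that assms by (intro is_dist_nash_update) (auto simp: strategy_profiles_def nash_gain_def)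
    then show ?thesis
      using that by (simp add: is_dist_def nash_map_def)
  qed
  then show "nash_map K E U \<sigma> \<in> strategy_profiles K E"
    by (auto simp: strategy_profiles_def nash_map_def)
qed

lemma continuous_on_nash_map:
  assumes finE: "\<And>k. k \<in> K \<Longrightarrow> finite (E k)"
    and cont: "\<And>k. k \<in> K \<Longrightarrow> continuous_on (strategy_profiles K E) (U k)"
  shows "continuous_on (strategy_profiles K E) (nash_map K E U)"
proof -
  define P where "P = strategy_profiles K E"
  have cont_gain: "continuous_on P (\<lambda>\<sigma>. nash_gain U \<sigma> k e)" if "k \<in> K" "e \<in> E k" for k e
  proof -
    have "(\<lambda>\<sigma>. \<sigma>(k := indicator {e})) \<in> P \<rightarrow> P"
      using that finE by (auto simp: P_def indicator_def intro!: strategy_profiles_update is_dist_indicator)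
    then have "continuous_on P (\<lambda>\<sigma>. U k (\<sigma>(k := indicator {e})))"
      using cont[OF that(1)] unfolding P_def
      by (intro continuous_on_compose2[OF _ continuous_on_fun_upd]) auto
    then show ?thesis
      unfolding nash_gain_def using cont[OF that(1)] P_def by (intro continuous_intros) auto
  qed
  have "continuous_on P (\<lambda>\<sigma>. nash_map K E U \<sigma> k e)" for k e
  proof (cases "k \<in> K \<and> e \<in> E k")
    case True
    have "1 + (\<Sum>e'\<in>E k. nash_gain U \<sigma> k e') \<noteq> 0" for \<sigma>
      by (metis (no_types) add_pos_nonneg less_irrefl max.cobounded1 nash_gain_def sum_nonneg
          zero_less_one)
    then show ?thesis
      using True cont_gain
      by (auto simp: nash_map_def intro!: continuous_intros continuous_on_profile_entry)
  next
    case False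
    then show ?thesis
      unfolding nash_map_def if_not_P[OF False] by simp
  qed
  then show ?thesis
    unfolding P_def by (intro continuous_on_coordinatewise_then_product)
qed

theorem nash_equilibrium_exists:
  fixes U :: "'k \<Rightarrow> ('k \<Rightarrow> 'e \<Rightarrow> real) \<Rightarrow> real"
  assumes finK: "finite K" and finE: "\<And>k. k \<in> K \<Longrightarrow> finite (E k)"
    and neE: "\<And>k. k \<in> K \<Longrightarrow> E k \<noteq> {}"
    and cont: "\<And>k. k \<in> K \<Longrightarrow> continuous_on (strategy_profiles K E) (U k)"
    and affine: "\<And>k \<sigma> \<tau>. k \<in> K \<Longrightarrow> \<sigma> \<in> strategy_profiles K E \<Longrightarrow> is_dist (E k) \<tau> \<Longrightarrow>
                   U k (\<sigma>(k := \<tau>)) = (\<Sum>e\<in>E k. \<tau> e * U k (\<sigma>(k := indicator {e})))"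
  obtains \<sigma> where "\<sigma> \<in> strategy_profiles K E"
    and "\<And>k \<tau>. k \<in> K \<Longrightarrow> is_dist (E k) \<tau> \<Longrightarrow> U k (\<sigma>(k := \<tau>)) \<le> U k \<sigma>"
proof -
  obtain \<sigma> where \<sigma>: "\<sigma> \<in> strategy_profiles K E" and fixed: "nash_map K E U \<sigma> = \<sigma>"
  proof (rule fixpoint_strategy_profiles[OF finK finE neE])
    show "continuous_on (strategy_profiles K E) (nash_map K E U)"
      using finE cont by (rule continuous_on_nash_map)
    show "nash_map K E U \<in> strategy_profiles K E \<rightarrow> strategy_profiles K E"
      using finE by (rule nash_map_strategy_profiles)
  qed
  have no_gain: "U k (\<sigma>(k := indicator {e})) \<le> U k \<sigma>" if k: "k \<in> K" and e: "e \<in> E k" for k e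
  proof -
    define u where "u e = U k (\<sigma>(k := indicator {e}))" for e
    have dist: "is_dist (E k) (\<sigma> k)"
      using \<sigma> k by (simp add: strategy_profiles_def)
    have mean: "U k \<sigma> = (\<Sum>e\<in>E k. \<sigma> k e * u e)"
      using affine[OF k \<sigma> dist] by (simp add: u_def)
    have "\<sigma> k e' = (\<sigma> k e' + max 0 (u e' - U k \<sigma>)) / (1 + (\<Sum>e''\<in>E k. max 0 (u e'' - U k \<sigma>)))"
      if "e' \<in> E k" for e'
      using fun_cong[OF fun_cong[OF fixed, of k], of e'] k that
      by (simp add: nash_map_def nash_gain_def u_def)
    then have "u e \<le> U k \<sigma>"
      using nash_fixpoint_no_gain[OF finE[OF k] dist _ e, of u] unfolding mean by blast
    then show ?thesis
      by (simp add: u_def)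
  qed
  show thesis
  proof (rule that[OF \<sigma>])
    fix k \<tau> assume k: "k \<in> K" and \<tau>: "is_dist (E k) \<tau>"
    have "U k (\<sigma>(k := \<tau>)) = (\<Sum>e\<in>E k. \<tau> e * U k (\<sigma>(k := indicator {e})))"
      by (rule affine[OF k \<sigma> \<tau>])
    also have "\<dots> \<le> (\<Sum>e\<in>E k. \<tau> e * U k \<sigma>)"
      using \<tau> no_gain[OF k] by (intro sum_mono mult_left_mono) (auto simp: is_dist_def)
    also have "\<dots> = U k \<sigma>"
      using \<tau> by (simp add: is_dist_def sum_distrib_right[symmetric])
    finally show "U k (\<sigma>(k := \<tau>)) \<le> U k \<sigma>" .
  qed
qed

lemma prod_fun_upd:
  assumes "finite I" "j \<in> I"
  shows "(\<Prod>k\<in>I. G k ((F(j := y)) k)) = G j y * (\<Prod>k\<in>I - {j}. G k (F k))"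
proof -
  have "(\<Prod>k\<in>I - {j}. G k ((F(j := y)) k)) = (\<Prod>k\<in>I - {j}. G k (F k))"
    by (rule prod.cong) auto
  then show ?thesis
    using prod.remove[OF assms, of "\<lambda>k. G k ((F(j := y)) k)"] by simp
qed

lemma sum_mult_indicator_singleton:
  fixes g :: "'x \<Rightarrow> real"
  assumes "finite X" "x \<in> X"
  shows "(\<Sum>y\<in>X. g y * indicator {y} x) = g x"
  using assms by (simp add: indicator_def Int_absorb1)

lemma sum_indicator_singleton_mult:
  fixes g :: "'x \<Rightarrow> real"
  assumes "finite X" "x \<in> X"
  shows "(\<Sum>y\<in>X. indicator {x} y * g y) = g x"
  using assms by (simp add: indicator_def)

lemma efg_J_update_adversary:
  fixes lam :: "'i::finite \<Rightarrow> 'st::metric_space \<Rightarrow> real"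
  assumes "finite (pball S s \<epsilon>)"
  shows "efg_J S As r p v Bs f \<epsilon> s i (lam(j := l)) chi
       = (\<Sum>t\<in>pball S s \<epsilon>. l t * efg_J S As r p v Bs f \<epsilon> s i (lam(j := indicator {t})) chi)"
proof -
  define Bl where "Bl = pball S s \<epsilon>"
  define W where "W st = (\<Sum>a\<in>Pi\<^sub>E UNIV As. (\<Prod>k\<in>UNIV - {j}. lam k (st k)) * (\<Prod>k\<in>UNIV. chi k (st k) (a k))
                       * efg_payoff S r p v Bs f s i st a)" for st
  have factor: "(\<Prod>k\<in>UNIV. (lam(j := l')) k (st k)) = l' (st j) * (\<Prod>k\<in>UNIV - {j}. lam k (st k))"
    for l' :: "'st \<Rightarrow> real" and st :: "'i \<Rightarrow> 'st"
    using prod_fun_upd[of UNIV j "\<lambda>k g. g (st k)" lam l'] by simp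
  have J_eq: "efg_J S As r p v Bs f \<epsilon> s i (lam(j := l')) chi
      = (\<Sum>st\<in>Pi\<^sub>E UNIV (\<lambda>_. Bl). l' (st j) * W st)" for l'
    unfolding efg_J_def factor by (simp add: Bl_def W_def sum_distrib_left mult.assoc)
  have "l (st j) = (\<Sum>t\<in>Bl. l t * indicator {t} (st j))" if "st \<in> Pi\<^sub>E UNIV (\<lambda>_. Bl)" for st
    using assms PiE_mem[OF that UNIV_I] unfolding Bl_def by (rule sum_mult_indicator_singleton[symmetric])
  then have "(\<Sum>st\<in>Pi\<^sub>E UNIV (\<lambda>_. Bl). l (st j) * W st)
      = (\<Sum>t\<in>Bl. l t * (\<Sum>st\<in>Pi\<^sub>E UNIV (\<lambda>_. Bl). indicator {t} (st j) * W st))"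
    by (simp add: sum_distrib_left sum_distrib_right sum.swap[of _ Bl] mult.assoc cong: sum.cong)
  then show ?thesis
    unfolding J_eq Bl_def by simp
qed

lemma efg_J_update_agent:
  fixes chi :: "'i::finite \<Rightarrow> 'st::metric_space \<Rightarrow> 'a \<Rightarrow> real"
  assumes "finite (pball S s \<epsilon>)" "finite (As j)"
  obtains C where "\<And>c. efg_J S As r p v Bs f \<epsilon> s i lam (chi(j := c))
                          = (\<Sum>t\<in>pball S s \<epsilon>. \<Sum>b\<in>As j. c t b * C t b)"
proof -
  define Bl where "Bl = pball S s \<epsilon>"
  define P where "P = Pi\<^sub>E UNIV (\<lambda>_::'i. Bl)"
  define W where "W st a = (\<Prod>k\<in>UNIV. lam k (st k)) * (\<Prod>k\<in>UNIV - {j}. chi k (st k) (a k))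
                       * efg_payoff S r p v Bs f s i st a" for st a
  have factor: "(\<Prod>k\<in>UNIV. (chi(j := c)) k (st k) (a k))
      = c (st j) (a j) * (\<Prod>k\<in>UNIV - {j}. chi k (st k) (a k))"
    for c :: "'st \<Rightarrow> 'a \<Rightarrow> real" and st :: "'i \<Rightarrow> 'st" and a :: "'i \<Rightarrow> 'a"
    using prod_fun_upd[of UNIV j "\<lambda>k g. g (st k) (a k)" chi c] by simp
  have J_eq: "efg_J S As r p v Bs f \<epsilon> s i lam (chi(j := c))
      = (\<Sum>st\<in>P. \<Sum>a\<in>Pi\<^sub>E UNIV As. c (st j) (a j) * W st a)" for c
    unfolding efg_J_def factor by (simp add: Bl_def P_def W_def mult.assoc mult.left_commute)
  define Q where "Q = P \<times> Pi\<^sub>E UNIV As"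
  define C where "C t b = (\<Sum>q\<in>Q. indicator {(t, b)} (fst q j, snd q j) * W (fst q) (snd q))" for t b
  have pick: "c (fst q j) (snd q j)
      = (\<Sum>z\<in>Bl \<times> As j. c (fst z) (snd z) * indicator {z} (fst q j, snd q j))"
    if "q \<in> Q" for c :: "'st \<Rightarrow> 'a \<Rightarrow> real" and q
    using that assms
    by (subst sum_mult_indicator_singleton) (auto simp: Q_def P_def Bl_def)
  have "efg_J S As r p v Bs f \<epsilon> s i lam (chi(j := c)) = (\<Sum>t\<in>Bl. \<Sum>b\<in>As j. c t b * C t b)" for c
  proof -
    have "efg_J S As r p v Bs f \<epsilon> s i lam (chi(j := c))
        = (\<Sum>q\<in>Q. c (fst q j) (snd q j) * W (fst q) (snd q))"
      by (simp add: J_eq Q_def sum.cartesian_product split_def)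
    also have "\<dots> = (\<Sum>q\<in>Q. \<Sum>z\<in>Bl \<times> As j.
        c (fst z) (snd z) * (indicator {z} (fst q j, snd q j) * W (fst q) (snd q)))"
      by (rule sum.cong[OF refl]) (simp add: pick sum_distrib_right mult.assoc)
    also have "\<dots> = (\<Sum>z\<in>Bl \<times> As j. c (fst z) (snd z) * C (fst z) (snd z))"
      by (simp add: sum.swap[of _ Q] sum_distrib_left C_def)
    also have "\<dots> = (\<Sum>t\<in>Bl. \<Sum>b\<in>As j. c t b * C t b)"
      by (simp add: sum.cartesian_product split_def)
    finally show ?thesis .
  qed
  then show ?thesis
    using that unfolding Bl_def by blast
qed

lemma efg_J_update_info_set:
  fixes chi :: "'i::finite \<Rightarrow> 'st::metric_space \<Rightarrow> 'a \<Rightarrow> real"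
  assumes fin: "finite (pball S s \<epsilon>)" "finite (As j)"
    and t: "t \<in> pball S s \<epsilon>" and w: "sum w (As j) = 1"
  shows "efg_J S As r p v Bs f \<epsilon> s i lam (chi(j := (chi j)(t := w)))
       = (\<Sum>a\<in>As j. w a * efg_J S As r p v Bs f \<epsilon> s i lam (chi(j := (chi j)(t := indicator {a}))))"
proof -
  obtain C where C: "\<And>c. efg_J S As r p v Bs f \<epsilon> s i lam (chi(j := c))
                          = (\<Sum>t\<in>pball S s \<epsilon>. \<Sum>b\<in>As j. c t b * C t b)"
    using efg_J_update_agent[of S s \<epsilon> As j r p v Bs f i lam chi] fin by blast
  define R where "R = (\<Sum>t'\<in>pball S s \<epsilon> - {t}. \<Sum>b\<in>As j. chi j t' b * C t' b)"
  have J_upd: "efg_J S As r p v Bs f \<epsilon> s i lam (chi(j := (chi j)(t := x)))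
      = (\<Sum>b\<in>As j. x b * C t b) + R" for x
  proof -
    have "(\<Sum>t'\<in>pball S s \<epsilon> - {t}. \<Sum>b\<in>As j. ((chi j)(t := x)) t' b * C t' b) = R"
      unfolding R_def by (rule sum.cong) auto
    then show ?thesis
      using C sum.remove[OF fin(1) t, of "\<lambda>t'. \<Sum>b\<in>As j. ((chi j)(t := x)) t' b * C t' b"] by simp
  qed
  have "efg_J S As r p v Bs f \<epsilon> s i lam (chi(j := (chi j)(t := indicator {a}))) = C t a + R"
    if "a \<in> As j" for a
    by (simp only: J_upd sum_indicator_singleton_mult[OF fin(2) that])
  then have "(\<Sum>a\<in>As j. w a * efg_J S As r p v Bs f \<epsilon> s i lam (chi(j := (chi j)(t := indicator {a}))))
      = (\<Sum>a\<in>As j. w a * (C t a + R))"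
    by simp
  also have "\<dots> = (\<Sum>b\<in>As j. w b * C t b) + R"
    using w by (simp add: distrib_left sum.distrib sum_distrib_right[symmetric])
  finally show ?thesis
    by (simp add: J_upd)
qed

lemma efg_J_update_agent_le:
  fixes chi :: "'i::finite \<Rightarrow> 'st::metric_space \<Rightarrow> 'a \<Rightarrow> real"
  assumes fin: "finite (pball S s \<epsilon>)" "finite (As j)"
    and local: "\<And>t. t \<in> pball S s \<epsilon> \<Longrightarrow>
       efg_J S As r p v Bs f \<epsilon> s i lam (chi(j := (chi j)(t := c t))) \<le> efg_J S As r p v Bs f \<epsilon> s i lam chi"
  shows "efg_J S As r p v Bs f \<epsilon> s i lam (chi(j := c)) \<le> efg_J S As r p v Bs f \<epsilon> s i lam chi"
proof -
  obtain C where C: "\<And>c. efg_J S As r p v Bs f \<epsilon> s i lam (chi(j := c))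
                          = (\<Sum>t\<in>pball S s \<epsilon>. \<Sum>b\<in>As j. c t b * C t b)"
    using efg_J_update_agent[of S s \<epsilon> As j r p v Bs f i lam chi] fin by blast
  define h where "h t x = (\<Sum>b\<in>As j. x b * C t b)" for t x
  have J_chi: "efg_J S As r p v Bs f \<epsilon> s i lam chi = (\<Sum>t\<in>pball S s \<epsilon>. h t (chi j t))"
    using C[of "chi j"] by (simp add: h_def)
  have "h t (c t) \<le> h t (chi j t)" if t: "t \<in> pball S s \<epsilon>" for t
  proof -
    have split: "efg_J S As r p v Bs f \<epsilon> s i lam (chi(j := (chi j)(t := x)))
        = h t x + (\<Sum>t'\<in>pball S s \<epsilon> - {t}. h t' (chi j t'))" for x
    proof -
      have "(\<Sum>t'\<in>pball S s \<epsilon> - {t}. h t' (((chi j)(t := x)) t'))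
          = (\<Sum>t'\<in>pball S s \<epsilon> - {t}. h t' (chi j t'))"
        by (rule sum.cong) auto
      then show ?thesis
        using C sum.remove[OF fin(1) t, of "\<lambda>t'. h t' (((chi j)(t := x)) t')"] by (simp add: h_def)
    qed
    show ?thesis
      using local[OF t] split[of "c t"] split[of "chi j t"] by simp
  qed
  then show ?thesis
    unfolding C J_chi h_def[symmetric] by (rule sum_mono)
qed

lemma continuous_on_efg_J:
  assumes "\<And>j t. continuous_on T (\<lambda>z. lam z j t)" and "\<And>j t a. continuous_on T (\<lambda>z. chi z j t a)"
  shows "continuous_on T (\<lambda>z. efg_J S As r p v Bs f \<epsilon> s i (lam z) (chi z))"
  unfolding efg_J_def by (intro continuous_intros assms)

lemma is_dist_image_iff:
  assumes "inj_on h X"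
  shows "is_dist (h ` X) d \<longleftrightarrow> is_dist X (\<lambda>x. d (h x))"
  using assms by (simp add: is_dist_def sum.reindex)

text \<open>Profiles of the auxiliary game are indexed by the decision points \<open>(i, None)\<close> of
  adversary i, with moves \<open>Inl t\<close>, and \<open>(i, Some t)\<close> of agent i observing t, with moves
  \<open>Inr a\<close>.\<close>

definition adversary_part :: "('i \<times> 'st option \<Rightarrow> 'st + 'a \<Rightarrow> real) \<Rightarrow> 'i \<Rightarrow> 'st \<Rightarrow> real" where
  "adversary_part \<sigma> i t = \<sigma> (i, None) (Inl t)"

definition agent_part :: "('i \<times> 'st option \<Rightarrow> 'st + 'a \<Rightarrow> real) \<Rightarrow> 'i \<Rightarrow> 'st \<Rightarrow> 'a \<Rightarrow> real" where
  "agent_part \<sigma> i t a = \<sigma> (i, Some t) (Inr a)"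

lemma adversary_part_update [simp]:
  "adversary_part (\<sigma>((i, None) := \<tau>)) = (adversary_part \<sigma>)(i := \<lambda>t. \<tau> (Inl t))"
  "adversary_part (\<sigma>((i, Some t) := \<tau>)) = adversary_part \<sigma>"
  by (auto simp: adversary_part_def fun_eq_iff)

lemma agent_part_update [simp]:
  "agent_part (\<sigma>((i, None) := \<tau>)) = agent_part \<sigma>"
  "agent_part (\<sigma>((i, Some t) := \<tau>)) = (agent_part \<sigma>)(i := (agent_part \<sigma> i)(t := \<lambda>a. \<tau> (Inr a)))"
  by (auto simp: agent_part_def fun_eq_iff)

definition efg_decision_points :: "'st set \<Rightarrow> ('i \<times> 'st option) set" where
  "efg_decision_points Bl = UNIV \<times> insert None (Some ` Bl)"

definition efg_moves :: "'st set \<Rightarrow> ('i \<Rightarrow> 'a set) \<Rightarrow> 'i \<times> 'st option \<Rightarrow> ('st + 'a) set" where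
  "efg_moves Bl As k = (case snd k of None \<Rightarrow> Inl ` Bl | Some t \<Rightarrow> Inr ` As (fst k))"

definition efg_utility ::
  "'st::metric_space set \<Rightarrow> ('i::finite \<Rightarrow> 'a set)
   \<Rightarrow> ('i \<Rightarrow> 'st \<Rightarrow> ('i \<Rightarrow> 'a) \<Rightarrow> ('i \<Rightarrow> 'b) \<Rightarrow> real)
   \<Rightarrow> ('st \<Rightarrow> ('i \<Rightarrow> 'a) \<Rightarrow> ('i \<Rightarrow> 'b) \<Rightarrow> 'st \<Rightarrow> real)
   \<Rightarrow> ('i \<Rightarrow> 'st \<Rightarrow> real) \<Rightarrow> ('i \<Rightarrow> 'b set) \<Rightarrow> ('st \<Rightarrow> 'b \<Rightarrow> 'st) \<Rightarrow> real \<Rightarrow> 'st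
   \<Rightarrow> 'i \<times> 'st option \<Rightarrow> ('i \<times> 'st option \<Rightarrow> 'st + 'a \<Rightarrow> real) \<Rightarrow> real"
where
  "efg_utility S As r p v Bs f \<epsilon> s k \<sigma> =
     (let J = efg_J S As r p v Bs f \<epsilon> s (fst k) (adversary_part \<sigma>) (agent_part \<sigma>)
      in if snd k = None then - J else J)"

lemma efg_moves_simps [simp]:
  "efg_moves Bl As (i, None) = Inl ` Bl"
  "efg_moves Bl As (i, Some t) = Inr ` As i"
  by (simp_all add: efg_moves_def)

lemma indicator_Inl_Inl [simp]: "(\<lambda>x. indicator {Inl t} (Inl x) :: real) = indicator {t}"
  and indicator_Inr_Inr [simp]: "(\<lambda>x. indicator {Inr a} (Inr x) :: real) = indicator {a}"
  by (auto simp: indicator_def fun_eq_iff)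

lemma continuous_on_efg_utility: "continuous_on T (efg_utility S As r p v Bs f \<epsilon> s k)"
  unfolding efg_utility_def Let_def adversary_part_def agent_part_def
  by (cases "snd k = None")
    (auto intro!: continuous_intros continuous_on_efg_J continuous_on_profile_entry)

lemma efg_utility_adversary_affine:
  assumes "finite (pball S s \<epsilon>)"
  shows "efg_utility S As r p v Bs f \<epsilon> s (i, None) (\<sigma>((i, None) := \<tau>))
       = (\<Sum>e\<in>Inl ` pball S s \<epsilon>.
            \<tau> e * efg_utility S As r p v Bs f \<epsilon> s (i, None) (\<sigma>((i, None) := indicator {e})))"
proof -
  have "efg_utility S As r p v Bs f \<epsilon> s (i, None) (\<sigma>((i, None) := \<tau>))
      = - efg_J S As r p v Bs f \<epsilon> s i ((adversary_part \<sigma>)(i := \<lambda>t. \<tau> (Inl t))) (agent_part \<sigma>)"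
    by (simp add: efg_utility_def)
  also have "\<dots> = - (\<Sum>t\<in>pball S s \<epsilon>. \<tau> (Inl t) *
      efg_J S As r p v Bs f \<epsilon> s i ((adversary_part \<sigma>)(i := indicator {t})) (agent_part \<sigma>))"
    by (subst efg_J_update_adversary[OF assms]) (rule refl)
  finally show ?thesis
    by (simp add: efg_utility_def sum.reindex sum_negf)
qed

lemma efg_utility_agent_affine:
  assumes "finite (pball S s \<epsilon>)" "finite (As i)" "t \<in> pball S s \<epsilon>" "is_dist (Inr ` As i) \<tau>"
  shows "efg_utility S As r p v Bs f \<epsilon> s (i, Some t) (\<sigma>((i, Some t) := \<tau>))
       = (\<Sum>e\<in>Inr ` As i.
            \<tau> e * efg_utility S As r p v Bs f \<epsilon> s (i, Some t) (\<sigma>((i, Some t) := indicator {e})))"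
proof -
  have sum_1: "(\<Sum>a\<in>As i. \<tau> (Inr a)) = 1"
    using assms(4) by (simp add: sum.reindex is_dist_def)
  have "efg_utility S As r p v Bs f \<epsilon> s (i, Some t) (\<sigma>((i, Some t) := \<tau>))
      = efg_J S As r p v Bs f \<epsilon> s i (adversary_part \<sigma>)
          ((agent_part \<sigma>)(i := (agent_part \<sigma> i)(t := \<lambda>a. \<tau> (Inr a))))"
    by (simp add: efg_utility_def)
  also have "\<dots> = (\<Sum>a\<in>As i. \<tau> (Inr a) *
      efg_J S As r p v Bs f \<epsilon> s i (adversary_part \<sigma>)
        ((agent_part \<sigma>)(i := (agent_part \<sigma> i)(t := indicator {a}))))"
    by (rule efg_J_update_info_set[where As = As and j = i, OF assms(1-3) sum_1])
  finally show ?thesis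
    by (simp add: efg_utility_def sum.reindex)
qed

lemma efg_utility_affine:
  assumes finB: "finite (pball S s \<epsilon>)" and finA: "\<And>i. finite (As i)"
    and k: "k \<in> efg_decision_points (pball S s \<epsilon>)" and \<tau>: "is_dist (efg_moves (pball S s \<epsilon>) As k) \<tau>"
  shows "efg_utility S As r p v Bs f \<epsilon> s k (\<sigma>(k := \<tau>))
       = (\<Sum>e\<in>efg_moves (pball S s \<epsilon>) As k.
            \<tau> e * efg_utility S As r p v Bs f \<epsilon> s k (\<sigma>(k := indicator {e})))"
proof (cases k)
  case (Pair i ko)
  show ?thesis
  proof (cases ko)
    case None
    show ?thesis
      unfolding Pair None efg_moves_simps by (rule efg_utility_adversary_affine[OF finB])
  next
    case (Some t)
    then have "t \<in> pball S s \<epsilon>"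
      using k by (auto simp: Pair efg_decision_points_def)
    then show ?thesis
      using \<tau> unfolding Pair Some efg_moves_simps by (intro efg_utility_agent_affine finB finA)
  qed
qed

theorem efg_nash_exists:
  fixes S :: "'st::metric_space set" and As :: "'i::finite \<Rightarrow> 'a set"
  assumes finB: "finite (pball S s \<epsilon>)" and neB: "pball S s \<epsilon> \<noteq> {}"
    and finA: "\<And>i. finite (As i)" and neA: "\<And>i. As i \<noteq> {}"
  shows "\<exists>lam chi. efg_nash S As r p v Bs f \<epsilon> s lam chi"
proof -
  define Bl where "Bl = pball S s \<epsilon>"
  define J where "J = efg_J S As r p v Bs f \<epsilon> s"
  define K :: "('i \<times> 'st option) set" where "K = efg_decision_points Bl"
  define E where "E = efg_moves Bl As"
  define U where "U = efg_utility S As r p v Bs f \<epsilon> s"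
  obtain \<sigma> :: "'i \<times> 'st option \<Rightarrow> 'st + 'a \<Rightarrow> real" where \<sigma>: "\<sigma> \<in> strategy_profiles K E"
    and opt: "\<And>k \<tau>. k \<in> K \<Longrightarrow> is_dist (E k) \<tau> \<Longrightarrow> U k (\<sigma>(k := \<tau>)) \<le> U k \<sigma>"
  proof (rule nash_equilibrium_exists)
    show "finite K"
      using finB by (simp add: K_def Bl_def efg_decision_points_def)
    show "finite (E k)" "E k \<noteq> {}" if "k \<in> K" for k
      using that finB finA neB neA by (auto simp: K_def E_def Bl_def efg_decision_points_def)
    show "continuous_on (strategy_profiles K E) (U k)" for k
      unfolding U_def by (rule continuous_on_efg_utility)
    show "U k (\<sigma>(k := \<tau>)) = (\<Sum>e\<in>E k. \<tau> e * U k (\<sigma>(k := indicator {e})))"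
      if "k \<in> K" and "is_dist (E k) \<tau>" for k \<sigma> \<tau>
      using that unfolding U_def K_def E_def Bl_def by (rule efg_utility_affine[OF finB finA])
  qed blast
  define lam where "lam = adversary_part \<sigma>"
  define chi where "chi = agent_part \<sigma>"
  have dist_k: "is_dist (E k) (\<sigma> k)" if "k \<in> K" for k
    using \<sigma> that by (simp add: strategy_profiles_def)
  have lam_dist: "is_dist Bl (lam i)" for i
    using dist_k[of "(i, None)"] unfolding lam_def adversary_part_def
    by (simp add: K_def E_def efg_decision_points_def is_dist_image_iff)
  have chi_dist: "is_dist (As i) (chi i t)" if "t \<in> Bl" for i t
    using dist_k[of "(i, Some t)"] that unfolding chi_def agent_part_def
    by (simp add: K_def E_def efg_decision_points_def is_dist_image_iff)
  have adv_opt: "J i lam chi \<le> J i (lam(i := l)) chi" if "is_dist Bl l" for i l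
    using opt[of "(i, None)" "case_sum l (\<lambda>_. 0)"] that
    by (simp add: K_def E_def U_def J_def efg_decision_points_def efg_utility_def is_dist_image_iff
        lam_def chi_def)
  have agent_opt: "J i lam (chi(i := c)) \<le> J i lam chi" if "\<forall>t\<in>Bl. is_dist (As i) (c t)" for i c
    unfolding J_def
  proof (rule efg_J_update_agent_le[OF finB finA])
    fix t assume "t \<in> pball S s \<epsilon>"
    then show "efg_J S As r p v Bs f \<epsilon> s i lam (chi(i := (chi i)(t := c t)))
        \<le> efg_J S As r p v Bs f \<epsilon> s i lam chi"
      using opt[of "(i, Some t)" "case_sum (\<lambda>_. 0) (c t)"] that
      by (simp add: K_def E_def U_def Bl_def efg_decision_points_def efg_utility_def
          is_dist_image_iff lam_def chi_def)
  qed
  have "efg_nash S As r p v Bs f \<epsilon> s lam chi"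
    using lam_dist chi_dist adv_opt agent_opt
    unfolding efg_nash_def adv_strat_def agent_strat_def J_def Bl_def by blast
  then show ?thesis
    by blast
qed

theorem lemma1:
  fixes S :: "'st::metric_space set"
    and As :: "'i::finite \<Rightarrow> 'a set"
    and Bs :: "'i \<Rightarrow> 'b set"
    and r :: "'i \<Rightarrow> 'st \<Rightarrow> ('i \<Rightarrow> 'a) \<Rightarrow> ('i \<Rightarrow> 'b) \<Rightarrow> real"
    and p :: "'st \<Rightarrow> ('i \<Rightarrow> 'a) \<Rightarrow> ('i \<Rightarrow> 'b) \<Rightarrow> 'st \<Rightarrow> real"
    and f :: "'st \<Rightarrow> 'b \<Rightarrow> 'st"
    and v :: "'i \<Rightarrow> 'st \<Rightarrow> real"
    and \<epsilon> :: real
  assumes finS: "finite S"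
    and finA: "\<And>i. finite (As i)"
    and neA: "\<And>i. As i \<noteq> {}"
    and eps: "\<epsilon> > 0"
    and kernel: "\<And>s a b. s \<in> S \<Longrightarrow> a \<in> Pi\<^sub>E UNIV As \<Longrightarrow> b \<in> Pi\<^sub>E UNIV Bs \<Longrightarrow>
                   (\<forall>s'\<in>S. 0 \<le> p s a b s') \<and> (\<Sum>s'\<in>S. p s a b s') = 1"
    and finj: "\<And>s. s \<in> S \<Longrightarrow> inj_on (fjoint f s) (Pi\<^sub>E UNIV Bs)"
    and fsurj: "\<And>s. s \<in> S \<Longrightarrow> Pi\<^sub>E UNIV (\<lambda>_. pball S s \<epsilon>) \<subseteq> fjoint f s ` Pi\<^sub>E UNIV Bs"
    and veq: "\<And>i j. v i = v j"
  shows "\<forall>s\<in>S. \<exists>lam chi. efg_nash S As r p v Bs f \<epsilon> s lam chi"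
proof
  fix s assume "s \<in> S"
  \<comment> \<open>Only finiteness, nonemptiness and \<open>\<epsilon> > 0\<close> matter: existence holds for arbitrary payoffs.\<close>
  have "finite (pball S s \<epsilon>)"
    using finS by (simp add: pball_def)
  moreover have "s \<in> pball S s \<epsilon>"
    using \<open>s \<in> S\<close> eps by (simp add: pball_def)
  ultimately show "\<exists>lam chi. efg_nash S As r p v Bs f \<epsilon> s lam chi"
    using efg_nash_exists[of S s \<epsilon> As] finA neA by blast
qed

end
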